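(* Let $\mathbb{K}$ be a field, $n>1$, $a=\sum_{j=0}^d c_j s^j\in\mathbb{K}[s]^n$ a non-zero row vector of degree $d$, and $A\in\mathbb{K}^{(2d+1)\times n(d+1)}$ the matrix whose $(i,\,kn+r)$ entry ($1\le i\le 2d+1$, $0\le k\le d$, $1\le r\le n$) is the $r$-th entry of $c_{i-1-k}$ (zero if $i-1-k\notin\{0,\dots,d\}$). With $\tilde q$ and $b_r$ as in the context, the leading vectors $LV(b_r^\flat)$, $r\in\tilde q$, are linearly independent over $\mathbb{K}$.
   Context: A column of a matrix is pivotal if it is either the first column and non-zero, or linearly independent of all previous columns; otherwise non-pivotal. $p$ is the set of pivotal indices of $A$, $q$ the set of non-pivotal indices, and $\tilde q=\{\min\varrho\mid\varrho\in q/(n)\}$ the basic non-pivotal indices. For $i\in q$ write uniquely $A_{*i}=\sum_{\{j\in p\mid j<i\}}\alpha^{(i)}_jA_{*j}$ and set $b_i=e_i-\sum_{\{j\in p\mid j<i\}}\alpha^{(i)}_je_j$. For $v=[w_0;\dots;w_d]\in\mathbb{K}^{n(d+1)}$ ($w_i\in\mathbb{K}^n$), $v^\flat=\sum_i s^iw_i$. For non-zero $h\in\mathbb{K}[s]^n$ with $t=\deg(h)=\max_i\deg(h_i)$, $LV(h)\in\mathbb{K}^n$ is the vector of coefficients of $s^t$ in $h_1,\dots,h_n$. *)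

theory Defs
  imports "HOL-Computational_Algebra.Polynomial"
begin

text \<open>Conventions: vectors in K^m are functions nat => 'a, only the entries with
index in {1..m} are relevant; matrices are functions nat => nat => 'a with rows
{1..m} and columns {1..N}. Vectors of polynomials in K[s]^n are functions
nat => 'a poly with relevant indices {1..n}.\<close>

definition sylv_mat :: "nat \<Rightarrow> nat \<Rightarrow> (nat \<Rightarrow> 'a::field poly) \<Rightarrow> nat \<Rightarrow> nat \<Rightarrow> 'a" where
  "sylv_mat n d a i c =
     (let k = (c - 1) div n; r = (c - 1) mod n + 1
      in if k \<le> i - 1 \<and> i - 1 - k \<le> d then coeff (a r) (i - 1 - k) else 0)"

definition in_col_span :: "nat \<Rightarrow> (nat \<Rightarrow> nat \<Rightarrow> 'a::field) \<Rightarrow> nat set \<Rightarrow> nat \<Rightarrow> bool" where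
  "in_col_span m M S j \<longleftrightarrow> (\<exists>\<beta>. \<forall>i\<in>{1..m}. M i j = (\<Sum>j'\<in>S. \<beta> j' * M i j'))"

definition pivots :: "nat \<Rightarrow> nat \<Rightarrow> (nat \<Rightarrow> nat \<Rightarrow> 'a::field) \<Rightarrow> nat set" where
  "pivots m N M = {j \<in> {1..N}. \<not> in_col_span m M {1..<j} j}"

definition nonpivots :: "nat \<Rightarrow> nat \<Rightarrow> (nat \<Rightarrow> nat \<Rightarrow> 'a::field) \<Rightarrow> nat set" where
  "nonpivots m N M = {1..N} - pivots m N M"

definition basic_nonpivots :: "nat \<Rightarrow> nat set \<Rightarrow> nat set" where
  "basic_nonpivots n q = {Min {j \<in> q. j mod n = i mod n} | i. i \<in> q}"

definition alpha :: "nat \<Rightarrow> nat \<Rightarrow> (nat \<Rightarrow> nat \<Rightarrow> 'a::field) \<Rightarrow> nat \<Rightarrow> nat \<Rightarrow> 'a" where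
  "alpha m N M i = (SOME \<alpha>. \<forall>r\<in>{1..m}.
      M r i = (\<Sum>j\<in>{j \<in> pivots m N M. j < i}. \<alpha> j * M r j))"

definition bvec :: "nat \<Rightarrow> nat \<Rightarrow> (nat \<Rightarrow> nat \<Rightarrow> 'a::field) \<Rightarrow> nat \<Rightarrow> nat \<Rightarrow> 'a" where
  "bvec m N M i = (\<lambda>l. if l \<in> {1..N} then
       (if l = i then 1 else 0)
       - (if l \<in> pivots m N M \<and> l < i then alpha m N M i l else 0)
     else 0)"

definition flat :: "nat \<Rightarrow> nat \<Rightarrow> (nat \<Rightarrow> 'a::field) \<Rightarrow> nat \<Rightarrow> 'a poly" where
  "flat n d v = (\<lambda>r. \<Sum>k\<le>d. monom (v (k * n + r)) k)"

definition pdeg :: "nat \<Rightarrow> (nat \<Rightarrow> 'a::zero poly) \<Rightarrow> nat" where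
  "pdeg n h = Max {degree (h r) | r. r \<in> {1..n}}"

definition LV :: "nat \<Rightarrow> (nat \<Rightarrow> 'a::zero poly) \<Rightarrow> nat \<Rightarrow> 'a" where
  "LV n h = (\<lambda>r. coeff (h r) (pdeg n h))"

definition lin_indep_family :: "nat \<Rightarrow> nat set \<Rightarrow> (nat \<Rightarrow> nat \<Rightarrow> 'a::field) \<Rightarrow> bool" where
  "lin_indep_family n I f \<longleftrightarrow>
     (\<forall>\<gamma>. (\<forall>r\<in>{1..n}. (\<Sum>i\<in>I. \<gamma> i * f i r) = 0) \<longrightarrow> (\<forall>i\<in>I. \<gamma> i = 0))"

end

theory Submission
  imports Defs
begin

text \<open>Write a non-pivotal index as i = k n + \<rho>(i) with 1 \<le> \<rho>(i) \<le> n (\<rho> = block_pos n). Since b_i has entry 1 at i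
  and vanishes beyond i, the polynomial vector b_i^\<flat> has degree k, and its leading vector is
  the k-th block of b_i: it has entry 1 at \<rho>(i) and vanishes beyond \<rho>(i). Basic non-pivotal
  indices lie in distinct residue classes modulo n, so the \<rho>(i) are distinct and the leading
  vectors form a triangular, hence linearly independent, family. No property of the
  matrix A is needed.\<close>

definition block_pos :: "nat \<Rightarrow> nat \<Rightarrow> nat" where
  "block_pos n i = (i - 1) mod n + 1"

lemma block_decomp:
  assumes "n > 0" "i \<ge> 1" shows "(i - 1) div n * n + block_pos n i = i"
  using assms div_mult_mod_eq[of "i - 1" n] unfolding block_pos_def by linarith

lemma block_pos_bounds: "n > 0 \<Longrightarrow> block_pos n i \<in> {1..n}"
  unfolding block_pos_def by (simp add: Suc_leI)

lemma block_pos_mod: "i \<ge> 1 \<Longrightarrow> block_pos n i mod n = i mod n"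
  unfolding block_pos_def by (simp add: mod_Suc_eq)

lemma bvec_eq_0_above:
  assumes "i < l" shows "bvec m N M i l = 0"
  using assms unfolding bvec_def by auto

lemma bvec_nonpivot_self:
  assumes "i \<in> nonpivots m N M" shows "bvec m N M i i = 1"
  using assms unfolding bvec_def nonpivots_def by auto

lemma coeff_flat: "coeff (flat n d v r) k = (if k \<le> d then v (k * n + r) else 0)"
proof -
  have "coeff (flat n d v r) k = (\<Sum>k'\<le>d. if k' = k then v (k' * n + r) else 0)"
    unfolding flat_def coeff_sum by (intro sum.cong) auto
  then show ?thesis by simp
qed

lemma LV_flat_last_nonzero:
  fixes v :: "nat \<Rightarrow> 'a::field"
  assumes n: "n > 0" and i: "i \<in> {1..n * (d + 1)}"
    and vi: "v i \<noteq> 0" and above: "\<And>l. i < l \<Longrightarrow> v l = 0"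
  shows "LV n (flat n d v) r = v ((i - 1) div n * n + r)"
proof -
  define k where "k = (i - 1) div n"
  define \<rho> where "\<rho> = block_pos n i"
  have dec: "i = k * n + \<rho>" unfolding k_def \<rho>_def using block_decomp[OF n] i by simp
  have \<rho>: "\<rho> \<in> {1..n}" unfolding \<rho>_def using block_pos_bounds[OF n] .
  have "i - 1 < (d + 1) * n" using i by (simp add: algebra_simps) arith
  then have "k < d + 1" unfolding k_def by (rule less_mult_imp_div_less)
  then have kd: "k \<le> d" by simp
  have deg_le: "degree (flat n d v r') \<le> k" if "r' \<ge> 1" for r'
  proof (rule degree_le, intro allI impI)
    fix j assume "k < j"
    then have "k * n + n \<le> j * n" using mult_le_mono1[of "Suc k" j n] by simp
    then have "i < j * n + r'" using dec \<rho>[unfolded atLeastAtMost_iff] that by linarith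
    then show "coeff (flat n d v r') j = 0" by (simp add: coeff_flat above)
  qed
  have "coeff (flat n d v \<rho>) k \<noteq> 0" using kd dec vi by (simp add: coeff_flat)
  then have "k \<le> degree (flat n d v \<rho>)" by (rule le_degree)
  then have "degree (flat n d v \<rho>) = k" using deg_le \<rho> by (simp add: le_antisym)
  then have "pdeg n (flat n d v) = k"
    unfolding pdeg_def using deg_le \<rho> by (intro Max_eqI) force+
  then show ?thesis unfolding LV_def k_def[symmetric] using kd by (simp add: coeff_flat)
qed

lemma
  fixes M :: "nat \<Rightarrow> nat \<Rightarrow> 'a::field"
  assumes n: "n > 0" and i: "i \<in> nonpivots m (n * (d + 1)) M"
  shows LV_flat_bvec_block_pos: "LV n (flat n d (bvec m (n * (d + 1)) M i)) (block_pos n i) = 1"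
    and LV_flat_bvec_beyond: "block_pos n i < r \<Longrightarrow> LV n (flat n d (bvec m (n * (d + 1)) M i)) r = 0"
proof -
  have i_range: "i \<in> {1..n * (d + 1)}" using i unfolding nonpivots_def by blast
  have LV: "LV n (flat n d (bvec m (n * (d + 1)) M i)) r = bvec m (n * (d + 1)) M i ((i - 1) div n * n + r)"
    for r using bvec_nonpivot_self[OF i] bvec_eq_0_above
    by (intro LV_flat_last_nonzero[OF n i_range]) simp_all
  have dec: "(i - 1) div n * n + block_pos n i = i" using block_decomp[OF n] i_range by simp
  show "LV n (flat n d (bvec m (n * (d + 1)) M i)) (block_pos n i) = 1"
    unfolding LV dec using bvec_nonpivot_self[OF i] .
  assume "block_pos n i < r"
  then have "i < (i - 1) div n * n + r" using dec by linarith
  then show "LV n (flat n d (bvec m (n * (d + 1)) M i)) r = 0" unfolding LV by (rule bvec_eq_0_above)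
qed

lemma lin_indep_family_triangular:
  fixes f :: "nat \<Rightarrow> nat \<Rightarrow> 'a::field"
  assumes I: "finite I" and inj: "inj_on \<rho> I"
    and \<rho>: "\<And>i. i \<in> I \<Longrightarrow> \<rho> i \<in> {1..n}"
    and diag: "\<And>i. i \<in> I \<Longrightarrow> f i (\<rho> i) \<noteq> 0"
    and above: "\<And>i r. i \<in> I \<Longrightarrow> \<rho> i < r \<Longrightarrow> f i r = 0"
  shows "lin_indep_family n I f"
  unfolding lin_indep_family_def
proof (intro allI impI ballI, rule ccontr)
  fix \<gamma> i
  assume sums: "\<forall>r\<in>{1..n}. (\<Sum>i\<in>I. \<gamma> i * f i r) = 0" and "i \<in> I" "\<gamma> i \<noteq> 0"
  define J where "J = {i \<in> I. \<gamma> i \<noteq> 0}"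
  have J: "finite J" "J \<noteq> {}" "J \<subseteq> I" using I \<open>i \<in> I\<close> \<open>\<gamma> i \<noteq> 0\<close> unfolding J_def by auto
  have "Max (\<rho> ` J) \<in> \<rho> ` J" using J by (intro Max_in) auto
  then obtain i0 where i0: "i0 \<in> J" and i0_max: "\<rho> i0 = Max (\<rho> ` J)"
    by (metis imageE)
  have max: "\<rho> j \<le> \<rho> i0" if "j \<in> J" for j
    unfolding i0_max using J(1) that by (intro Max_ge) auto
  have i0I: "i0 \<in> I" using i0 J by blast
  have others: "\<gamma> j * f j (\<rho> i0) = 0" if "j \<in> I - {i0}" for j
  proof (cases "j \<in> J")
    case True
    then have "\<rho> j \<le> \<rho> i0" by (rule max)
    moreover have "\<rho> j \<noteq> \<rho> i0" using inj_onD[OF inj, of j i0] i0I that by auto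
    ultimately show ?thesis using above that by simp
  qed (use that in \<open>simp add: J_def\<close>)
  have "(\<Sum>j\<in>I. \<gamma> j * f j (\<rho> i0)) = \<gamma> i0 * f i0 (\<rho> i0)"
    using I i0I others by (simp add: sum.remove sum.neutral)
  moreover have "\<gamma> i0 * f i0 (\<rho> i0) \<noteq> 0" using i0 diag[OF i0I] unfolding J_def by simp
  moreover have "(\<Sum>j\<in>I. \<gamma> j * f j (\<rho> i0)) = 0" using sums \<rho>[OF i0I] by blast
  ultimately show False by simp
qed

lemma Min_residue_class:
  fixes q :: "nat set" and n :: nat
  assumes "finite q" "i \<in> q"
  defines "x \<equiv> Min {j \<in> q. j mod n = i mod n}"
  shows "x \<in> q" "x mod n = i mod n"
proof -
  have "x \<in> {j \<in> q. j mod n = i mod n}" unfolding x_def using assms by (intro Min_in) auto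
  then show "x \<in> q" "x mod n = i mod n" by auto
qed

lemma basic_nonpivots_subset: "finite q \<Longrightarrow> basic_nonpivots n q \<subseteq> q"
  unfolding basic_nonpivots_def using Min_residue_class(1) by blast

lemma inj_on_block_pos_basic_nonpivots:
  assumes "finite q" "0 \<notin> q" shows "inj_on (block_pos n) (basic_nonpivots n q)"
proof (rule inj_onI)
  fix x y assume "x \<in> basic_nonpivots n q" "y \<in> basic_nonpivots n q" and xy: "block_pos n x = block_pos n y"
  then obtain i i' where i: "i \<in> q" "x = Min {j \<in> q. j mod n = i mod n}"
    and i': "i' \<in> q" "y = Min {j \<in> q. j mod n = i' mod n}"
    unfolding basic_nonpivots_def by blast
  have "x \<in> q" "y \<in> q" using Min_residue_class(1)[OF assms(1)] i i' by simp_all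
  then have "x \<ge> 1" "y \<ge> 1" using assms(2) by (auto simp: Suc_le_eq intro: gr0I)
  have "i mod n = x mod n" using Min_residue_class(2)[OF assms(1) i(1)] i(2) by simp
  also have "\<dots> = y mod n" using block_pos_mod \<open>x \<ge> 1\<close> \<open>y \<ge> 1\<close> xy by metis
  also have "\<dots> = i' mod n" using Min_residue_class(2)[OF assms(1) i'(1)] i'(2) by simp
  finally show "x = y" using i i' by simp
qed

theorem lemma10:
  fixes a :: "nat \<Rightarrow> 'a::field poly" and n d :: nat
  assumes "n > 1"
    and "\<exists>r\<in>{1..n}. a r \<noteq> 0"
    and "d = pdeg n a"
  shows "lin_indep_family n
           (basic_nonpivots n (nonpivots (2*d+1) (n*(d+1)) (sylv_mat n d a)))
           (\<lambda>i. LV n (flat n d (bvec (2*d+1) (n*(d+1)) (sylv_mat n d a) i)))"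
proof -
  define q where "q = nonpivots (2*d+1) (n*(d+1)) (sylv_mat n d a)"
  have n: "n > 0" using assms(1) by simp
  have q: "finite q" "0 \<notin> q" unfolding q_def nonpivots_def by auto
  have I: "basic_nonpivots n q \<subseteq> q" using basic_nonpivots_subset[OF q(1)] .
  have "lin_indep_family n (basic_nonpivots n q)
          (\<lambda>i. LV n (flat n d (bvec (2*d+1) (n*(d+1)) (sylv_mat n d a) i)))"
  proof (rule lin_indep_family_triangular[where \<rho> = "block_pos n"])
    show "finite (basic_nonpivots n q)" using q(1) I finite_subset by blast
    show "inj_on (block_pos n) (basic_nonpivots n q)" using inj_on_block_pos_basic_nonpivots[OF q] .
    fix i assume "i \<in> basic_nonpivots n q"
    then have i: "i \<in> nonpivots (2*d+1) (n*(d+1)) (sylv_mat n d a)" using I unfolding q_def by blast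
    show "block_pos n i \<in> {1..n}" using block_pos_bounds[OF n] .
    show "LV n (flat n d (bvec (2*d+1) (n*(d+1)) (sylv_mat n d a) i)) (block_pos n i) \<noteq> 0"
      using LV_flat_bvec_block_pos[OF n i] by simp
    show "LV n (flat n d (bvec (2*d+1) (n*(d+1)) (sylv_mat n d a) i)) r = 0" if "block_pos n i < r" for r
      using LV_flat_bvec_beyond[OF n i that] .
  qed
  then show ?thesis unfolding q_def .
qed

end
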